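(* Let $n,k$ be integers with $1<k<n-1$ and let $\mathcal{P}_{k,n}=\{x\in[0,1]^n:\sum_{i=1}^nx_i=k\}$. There is no differentiable strong Bernoulli factory for $\mathcal{P}_{k,n}$.
   Context: A Bernoulli factory with output set $V$ (for inputs $x\in[0,1]^n$) is a (possibly infinite) rooted binary tree whose internal nodes are labeled by an index $i\in[n]$ or a known constant $c\in(0,1)$ and whose leaves are labeled by elements of $V$; on input $x$ one walks from the root, at a node labeled $i$ flipping a fresh independent coin that is $1$ with probability $x_i$, at a node labeled $c$ a fresh coin of bias $c$, following the edge labeled by the outcome, and outputs the label of the leaf reached; $\mathcal{F}(x)$ is the output and $T_{\mathcal{F}}(x)$ the depth of the leaf reached ($\infty$ if none). For a polytope $\mathcal{P}$ with vertex set $V$, a strong Bernoulli factory for $\mathcal{P}$ is such a factory with output set $V$ that terminates almost surely and satisfies $\mathbb{E}[\mathcal{F}(x)]=x$ for all $x\in\mathcal{P}$. Define $P_v(x)=\Pr[\mathcal{F}(x)=v]$ and $P_{v,T}(x)=\Pr[\mathcal{F}(x)=v\wedge T_{\mathcal{F}}(x)\le T]$; the latter is the polynomial equal to the sum, over leaves labeled $v$ at depth at most $T$, of the product of the transition probabilities along the root-to-leaf path. Let $\mathcal{H}(\mathcal{P})$ be the affine span of $\mathcal{P}$ and $\mathcal{H}_0(\mathcal{P})=\{y-y':y,y'\in\mathcal{H}(\mathcal{P})\}$. $\mathcal{F}$ is differentiable (as a factory for $\mathcal{P}$) if for each $v\in V$ and each $u\in\mathcal{H}_0(\mathcal{P})$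 with $\|u\|=1$, at every $x\in\mathcal{P}$ the directional derivative $\partial_uP_v(x)$ exists and equals $\lim_{T\to\infty}\partial_uP_{v,T}(x)$. *)

theory Defs
  imports "HOL-Analysis.Analysis"
begin

text \<open>A tree is encoded as a
labelling of all positions (finite bool lists = paths from the root; True = outcome 1).
Positions below a leaf are irrelevant (unreachable).\<close>

datatype ('i, 'v) bf_node = Coin 'i | Const real | Leaf 'v

type_synonym ('i, 'v) bf_tree = "bool list \<Rightarrow> ('i, 'v) bf_node"

definition is_leaf :: "('i, 'v) bf_node \<Rightarrow> bool" where
  "is_leaf a = (case a of Leaf _ \<Rightarrow> True | _ \<Rightarrow> False)"

definition trans_prob :: "real ^ 'n \<Rightarrow> ('n, 'v) bf_node \<Rightarrow> bool \<Rightarrow> real" where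
  "trans_prob x a b = (case a of
      Coin i \<Rightarrow> (if b then x $ i else 1 - x $ i)
    | Const c \<Rightarrow> (if b then c else 1 - c)
    | Leaf _ \<Rightarrow> 1)"

definition reach :: "('i, 'v) bf_tree \<Rightarrow> bool list \<Rightarrow> bool" where
  "reach t p = (\<forall>j<length p. \<not> is_leaf (t (take j p)))"

definition path_weight :: "('n, 'v) bf_tree \<Rightarrow> real ^ 'n \<Rightarrow> bool list \<Rightarrow> real" where
  "path_weight t x p = (\<Prod>j<length p. trans_prob x (t (take j p)) (p ! j))"

definition PvT :: "('n, 'v) bf_tree \<Rightarrow> 'v \<Rightarrow> real ^ 'n \<Rightarrow> nat \<Rightarrow> real" where
  "PvT t v x T = (\<Sum>p\<in>{p. length p \<le> T \<and> reach t p \<and> t p = Leaf v}. path_weight t x p)"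

text \<open>P_v(x) = Pr[F(x) = v] = lim_T P_{v,T}(x).\<close>
definition Pv :: "('n, 'v) bf_tree \<Rightarrow> 'v \<Rightarrow> real ^ 'n \<Rightarrow> real" where
  "Pv t v x = lim (\<lambda>T. PvT t v x T)"

text \<open>Pr[T_F(x) \<le> T].\<close>
definition term_prob :: "('n, 'v) bf_tree \<Rightarrow> real ^ 'n \<Rightarrow> nat \<Rightarrow> real" where
  "term_prob t x T = (\<Sum>p\<in>{p. length p \<le> T \<and> reach t p \<and> is_leaf (t p)}. path_weight t x p)"

definition unit_cube :: "(real ^ 'n) set" where
  "unit_cube = {x. \<forall>i. 0 \<le> x $ i \<and> x $ i \<le> 1}"

definition vertices :: "(real ^ 'n) set \<Rightarrow> (real ^ 'n) set" where
  "vertices P = {v. v extreme_point_of P}"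

definition bernoulli_factory :: "(real ^ 'n) set \<Rightarrow> ('n, real ^ 'n) bf_tree \<Rightarrow> bool" where
  "bernoulli_factory V t = (\<forall>p. case t p of
       Const c \<Rightarrow> 0 < c \<and> c < 1
     | Leaf v \<Rightarrow> v \<in> V
     | Coin _ \<Rightarrow> True)"

definition strong_factory :: "(real ^ 'n) set \<Rightarrow> ('n, real ^ 'n) bf_tree \<Rightarrow> bool" where
  "strong_factory P t = (bernoulli_factory (vertices P) t \<and>
     (\<forall>x\<in>P. (\<lambda>T. term_prob t x T) \<longlonglongrightarrow> 1) \<and>
     (\<forall>x\<in>P. (\<Sum>v\<in>vertices P. Pv t v x *\<^sub>R v) = x))"

definition H0 :: "(real ^ 'n) set \<Rightarrow> (real ^ 'n) set" where
  "H0 P = {y - y' | y y'. y \<in> affine hull P \<and> y' \<in> affine hull P}"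

text \<open>Differentiability. P_v is only meaningful on [0,1]^n, so the directional derivative
of P_v at x is taken along the line x + s u restricted to the cube.\<close>
definition differentiable_factory :: "(real ^ 'n) set \<Rightarrow> ('n, real ^ 'n) bf_tree \<Rightarrow> bool" where
  "differentiable_factory P t = (\<forall>v\<in>vertices P. \<forall>u\<in>H0 P. norm u = 1 \<longrightarrow> (\<forall>x\<in>P.
     \<exists>D. ((\<lambda>s. Pv t v (x + s *\<^sub>R u)) has_real_derivative D)
            (at 0 within {s. x + s *\<^sub>R u \<in> unit_cube}) \<and>
         (\<lambda>T. deriv (\<lambda>s. PvT t v (x + s *\<^sub>R u) T) 0) \<longlonglongrightarrow> D))"

definition Pkn :: "nat \<Rightarrow> (real ^ 'n) set" where
  "Pkn k = {x \<in> unit_cube. (\<Sum>i\<in>UNIV. x $ i) = real k}"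

end

theory Submission
  imports Defs
begin

(*
  Let t be a differentiable strong factory for P_{k,n}. Fix a k-set W containing i, i' and
  avoiding j, j', and let v = 1_{W - i + j}. Since the only convex representation of the
  vertex 1_W is 1_W itself, P_v(1_W) = 0; hence every truncation P_{v,T}, a polynomial that
  is nonnegative on the cube, has a minimum at 1_W, and its derivative there is nonnegative
  in every direction pointing into the cube. In particular A_T = dP_{v,T}(e_j),
  A'_T = dP_{v,T}(e_j'), B_T = dP_{v,T}(-e_i) and B'_T = dP_{v,T}(-e_i') are nonnegative.
  On an edge 1_W + s (1_{W - a + b} - 1_W) of P_{k,n} the output distribution is forced:
  every vertex other than the two endpoints has probability 0, and 1_{W - a + b} has
  probability s. Differentiability along the three edges for (i,j), (i',j) and (i,j')
  therefore gives A_T + B_T -> 1, A_T + B'_T -> 0 and A'_T + B_T -> 0, so A_T, B_T -> 0,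
  which is absurd.
*)

lemma has_real_derivative_along_line:
  fixes g :: "'a::real_normed_vector \<Rightarrow> real"
  assumes "(g has_derivative L) (at w)"
  shows "((\<lambda>s. g (w + s *\<^sub>R u)) has_real_derivative L u) (at 0 within S)"
proof -
  have line: "((\<lambda>s::real. w + s *\<^sub>R u) has_derivative (\<lambda>s. s *\<^sub>R u)) (at 0 within S)"
    by (auto intro!: derivative_eq_intros)
  have "((\<lambda>s. g (w + s *\<^sub>R u)) has_derivative (\<lambda>s. L (s *\<^sub>R u))) (at 0 within S)"
    using has_derivative_compose[OF line, of g L] assms by simp
  moreover have "(\<lambda>s. L (s *\<^sub>R u)) = (*) (L u)"
    using has_derivative_bounded_linear[OF assms] by (auto simp: fun_eq_iff linear_simps)
  ultimately show ?thesis
    by (simp add: has_field_derivative_def)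
qed

lemma has_derivative_nonneg_at_one_sided_min:
  fixes g :: "'a::real_normed_vector \<Rightarrow> real"
  assumes g: "(g has_derivative L) (at w)" and "0 < \<delta>"
    and min: "\<And>s. 0 < s \<Longrightarrow> s < \<delta> \<Longrightarrow> g w \<le> g (w + s *\<^sub>R u)"
  shows "0 \<le> L u"
proof (rule ccontr)
  assume "\<not> 0 \<le> L u"
  then obtain d where "0 < d" and dec: "\<And>h. 0 < h \<Longrightarrow> h < d \<Longrightarrow> g (w + h *\<^sub>R u) < g w"
    using DERIV_neg_dec_right[OF has_real_derivative_along_line[OF g, of u UNIV]] by auto
  define h where "h = min d \<delta> / 2"
  have "0 < h" "h < d" "h < \<delta>"
    using \<open>0 < d\<close> \<open>0 < \<delta>\<close> by (auto simp: h_def)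
  then show False
    using dec[of h] min[of h] by linarith
qed

lemma has_real_derivative_within_eq_slope:
  fixes f :: "real \<Rightarrow> real"
  assumes f: "(f has_real_derivative D) (at 0 within S)" and "0 < \<delta>" and "{0..\<delta>} \<subseteq> S"
    and f_linear: "\<And>s. 0 \<le> s \<Longrightarrow> s \<le> \<delta> \<Longrightarrow> f s = c * s"
  shows "D = c"
proof (rule has_field_derivative_unique)
  show "(f has_real_derivative D) (at 0 within {0..\<delta>})"
    using f assms(3) by (rule DERIV_subset)
  have "((\<lambda>s. c * s) has_real_derivative c) (at 0 within {0..\<delta>})"
    by (auto intro!: derivative_eq_intros)
  then show "(f has_real_derivative c) (at 0 within {0..\<delta>})"
    by (rule has_field_derivative_transform_within[OF _ \<open>0 < \<delta>\<close>]) (use \<open>0 < \<delta>\<close> f_linear in auto)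
  show "at 0 within {0..\<delta>} \<noteq> bot"
    using \<open>0 < \<delta>\<close> by (simp add: at_within_Icc_at_right)
qed

lemma differentiable_prod:
  fixes f :: "'i \<Rightarrow> 'a::real_normed_vector \<Rightarrow> 'b::real_normed_field"
  assumes "\<And>i. i \<in> I \<Longrightarrow> f i differentiable (at x within S)"
  shows "(\<lambda>x. \<Prod>i\<in>I. f i x) differentiable (at x within S)"
proof -
  obtain f' where "\<And>i. i \<in> I \<Longrightarrow> (f i has_derivative f' i) (at x within S)"
    using assms unfolding differentiable_def by metis
  then show ?thesis
    unfolding differentiable_def by (blast intro: has_derivative_prod)
qed

lemma trans_prob_nonneg:
  assumes "bernoulli_factory V t" and "x \<in> unit_cube"
  shows "0 \<le> trans_prob x (t p) b"
  using assms unfolding bernoulli_factory_def unit_cube_def trans_prob_def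
  by (cases "t p") (auto dest: spec[of _ p])

lemma path_weight_nonneg:
  assumes "bernoulli_factory V t" and "x \<in> unit_cube"
  shows "0 \<le> path_weight t x p"
  unfolding path_weight_def by (intro prod_nonneg ballI trans_prob_nonneg[OF assms])

lemma finite_bool_lists_length_le: "finite {p :: bool list. length p \<le> T \<and> Q p}"
  by (rule finite_subset[OF _ finite_lists_length_le[of UNIV T]]) auto

lemma PvT_nonneg:
  assumes "bernoulli_factory V t" and "x \<in> unit_cube"
  shows "0 \<le> PvT t v x T"
  unfolding PvT_def by (intro sum_nonneg path_weight_nonneg[OF assms])

lemma incseq_PvT:
  assumes "bernoulli_factory V t" and "x \<in> unit_cube"
  shows "incseq (PvT t v x)"
  unfolding incseq_def PvT_def
  by (auto intro!: sum_mono2 finite_bool_lists_length_le path_weight_nonneg[OF assms])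

lemma PvT_le_term_prob:
  assumes "bernoulli_factory V t" and "x \<in> unit_cube"
  shows "PvT t v x T \<le> term_prob t x T"
  unfolding PvT_def term_prob_def
  by (auto intro!: sum_mono2 finite_bool_lists_length_le path_weight_nonneg[OF assms]
           simp: is_leaf_def)

lemma PvT_tendsto_Pv:
  assumes bf: "bernoulli_factory V t" and x: "x \<in> unit_cube"
    and "convergent (term_prob t x)"
  shows "PvT t v x \<longlonglongrightarrow> Pv t v x"
proof -
  obtain K where K: "\<And>T. norm (term_prob t x T) \<le> K"
    using convergent_imp_Bseq[OF assms(3)] by (auto simp: Bseq_def)
  have "norm (PvT t v x T) \<le> K" for T
    using PvT_nonneg[OF bf x, of v T] PvT_le_term_prob[OF bf x, of v T] K[of T] by simp
  then have "Bseq (PvT t v x)"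
    by (intro BseqI')
  then have "convergent (PvT t v x)"
    using Bseq_monoseq_convergent incseq_PvT[OF bf x] incseq_imp_monoseq by blast
  then show ?thesis
    unfolding Pv_def by (simp add: convergent_LIMSEQ_iff)
qed

lemma PvT_le_Pv:
  assumes "bernoulli_factory V t" and "x \<in> unit_cube" and "convergent (term_prob t x)"
  shows "PvT t v x T \<le> Pv t v x"
  by (rule incseq_le[OF incseq_PvT PvT_tendsto_Pv]) (use assms in auto)

lemma trans_prob_differentiable: "(\<lambda>x. trans_prob x a b) differentiable (at w)"
proof -
  have "(\<lambda>x. x $ i) differentiable (at w)" for i
    by (rule bounded_linear_imp_differentiable) (rule bounded_linear_vec_nth)
  then show ?thesis
    by (cases a; cases b) (auto simp: trans_prob_def)
qed

lemma PvT_differentiable: "(\<lambda>x. PvT t v x T) differentiable (at w)"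
  unfolding PvT_def path_weight_def
  by (intro differentiable_sum ballI differentiable_prod trans_prob_differentiable
        finite_bool_lists_length_le)

lemma scaleR_diff_in_H0:
  assumes "x \<in> P" and "y \<in> P"
  shows "c *\<^sub>R (y - x) \<in> H0 P"
proof -
  have "(1 - c) *\<^sub>R x + c *\<^sub>R y \<in> affine hull P"
    using assms by (intro mem_affine[OF affine_affine_hull] hull_inc) auto
  moreover have "(1 - c) *\<^sub>R x + c *\<^sub>R y = x + c *\<^sub>R (y - x)"
    by (simp add: algebra_simps)
  ultimately show ?thesis
    unfolding H0_def using hull_inc[OF assms(1)] by force
qed

lemma card_exchange:
  assumes "finite W" and "i \<in> W" and "j \<notin> W"
  shows "card (insert j (W - {i})) = card W"
proof -
  have "0 < card W"
    using assms by (auto simp: card_gt_0_iff)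
  then show ?thesis
    using assms by (simp add: card_Diff_singleton)
qed

lemma eq_or_exchange_if_agree_off_pair:
  assumes W: "finite W" and card: "card U = card W" and i: "i \<in> W" and j: "j \<notin> W"
    and agree: "\<And>l. l \<noteq> i \<Longrightarrow> l \<noteq> j \<Longrightarrow> l \<in> U \<longleftrightarrow> l \<in> W"
  shows "U = W \<or> U = insert j (W - {i})"
proof -
  have U: "U = (W - {i}) \<union> (U \<inter> {i, j})"
    using agree i j by auto
  have card_remove: "card (W - {i}) + 1 = card W"
    using card.remove[OF W i] by simp
  consider "i \<in> U" "j \<in> U" | "i \<in> U" "j \<notin> U" | "i \<notin> U" "j \<in> U" | "i \<notin> U" "j \<notin> U"
    by blast
  then show ?thesis
  proof cases
    case 1
    then have "U = insert j W"
      using U i by auto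
    then show ?thesis
      using card W j by simp
  next
    case 2
    then show ?thesis
      using U i by auto
  next
    case 3
    then show ?thesis
      using U by auto
  next
    case 4
    then have "U = W - {i}"
      using U by auto
    then show ?thesis
      using card card_remove by simp
  qed
qed

definition ind_vec :: "'n set \<Rightarrow> real ^ 'n" where
  "ind_vec W = (\<chi> l. if l \<in> W then 1 else 0)"

lemma ind_vec_nth [simp]: "ind_vec W $ l = (if l \<in> W then 1 else 0)"
  by (simp add: ind_vec_def)

lemma ind_vec_eq_iff [simp]: "ind_vec U = ind_vec V \<longleftrightarrow> U = V"
  by (auto simp: vec_eq_iff split: if_splits)

lemma sum_ind_vec: "(\<Sum>l\<in>UNIV. ind_vec W $ l) = real (card (W :: 'n::finite set))"
  by (simp add: sum.If_cases)

lemma ind_vec_exchange_diff: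
  assumes "i \<in> W" and "j \<notin> W"
  shows "ind_vec (insert j (W - {i})) - ind_vec W = axis j 1 - axis i (1 :: real)"
  using assms by (auto simp: vec_eq_iff axis_def)

lemma ind_vec_in_Pkn: "card (W :: 'n::finite set) = k \<Longrightarrow> ind_vec W \<in> Pkn k"
  by (simp add: Pkn_def unit_cube_def sum.If_cases)

lemma Pkn_subset_unit_cube: "Pkn k \<subseteq> unit_cube"
  by (simp add: Pkn_def)

lemma convex_Pkn: "convex (Pkn k :: (real ^ 'n::finite) set)"
proof (rule convexI)
  fix x y :: "real ^ 'n" and a b :: real
  assume x: "x \<in> Pkn k" and y: "y \<in> Pkn k" and ab: "0 \<le> a" "0 \<le> b" "a + b = 1"
  have "(\<Sum>l\<in>UNIV. (a *\<^sub>R x + b *\<^sub>R y) $ l) = a * real k + b * real k"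
    using x y by (simp add: Pkn_def sum.distrib flip: sum_distrib_left)
  moreover have "0 \<le> (a *\<^sub>R x + b *\<^sub>R y) $ l \<and> (a *\<^sub>R x + b *\<^sub>R y) $ l \<le> 1" for l
    using x y ab convex_bound_le[of "x $ l" 1 "y $ l" a b]
    by (auto simp: Pkn_def unit_cube_def)
  ultimately show "a *\<^sub>R x + b *\<^sub>R y \<in> Pkn k"
    using ab by (simp add: Pkn_def unit_cube_def flip: distrib_right)
qed

lemma exchange_edge_in_Pkn:
  fixes W :: "'n::finite set"
  assumes W: "card W = k" and i: "i \<in> W" and j: "j \<notin> W" and s: "0 \<le> s" "s \<le> 1"
  shows "ind_vec W + s *\<^sub>R (ind_vec (insert j (W - {i})) - ind_vec W) \<in> Pkn k"
proof -
  have "card (insert j (W - {i})) = k"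
    using card_exchange[of W i j] W i j by simp
  then have "(1 - s) *\<^sub>R ind_vec W + s *\<^sub>R ind_vec (insert j (W - {i})) \<in> Pkn k"
    using W s by (intro convexD[OF convex_Pkn] ind_vec_in_Pkn) auto
  then show ?thesis
    by (simp add: algebra_simps)
qed

lemma convex_combination_01_eq:
  fixes a b u :: real
  assumes "0 < u" "u < 1" "0 \<le> a" "a \<le> 1" "0 \<le> b" "b \<le> 1"
    and "(1 - u) * a + u * b \<in> {0, 1}"
  shows "a = b"
proof -
  have "0 \<le> (1 - u) * a" "0 \<le> u * b" "0 \<le> (1 - u) * (1 - a)" "0 \<le> u * (1 - b)"
    using assms by simp_all
  moreover have "(1 - u) * a + u * b = 0 \<or> (1 - u) * (1 - a) + u * (1 - b) = 0"
    using assms(7) by (auto simp: algebra_simps)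
  ultimately have "(1 - u) * a = 0 \<and> u * b = 0 \<or> (1 - u) * (1 - a) = 0 \<and> u * (1 - b) = 0"
    by (simp add: add_nonneg_eq_0_iff)
  then show ?thesis
    using assms(1,2) by auto
qed

lemma extreme_point_of_if_01:
  assumes x: "x \<in> S" and S: "S \<subseteq> unit_cube" and x01: "\<And>l. x $ l \<in> {0, 1}"
  shows "x extreme_point_of S"
  unfolding extreme_point_of_def
proof (intro conjI ballI x notI)
  fix a b assume a: "a \<in> S" and b: "b \<in> S" and "x \<in> open_segment a b"
  then obtain u where u: "0 < u" "u < 1" and xab: "x = (1 - u) *\<^sub>R a + u *\<^sub>R b" and "a \<noteq> b"
    unfolding in_segment by blast
  moreover have "a $ l = b $ l" for l
    using a b S x01[of l] xab u
    by (intro convex_combination_01_eq[of u]) (auto simp: unit_cube_def)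
  ultimately show False
    by (simp add: vec_eq_iff)
qed

lemma Pkn_other_fractional_coord:
  assumes x: "x \<in> Pkn k" and l: "0 < x $ l" "x $ l < 1"
  obtains m where "m \<noteq> l" "0 < x $ m" "x $ m < 1"
proof -
  have "\<exists>m. m \<noteq> l \<and> 0 < x $ m \<and> x $ m < 1"
  proof (rule ccontr)
    assume no_other: "\<nexists>m. m \<noteq> l \<and> 0 < x $ m \<and> x $ m < 1"
    have "0 \<le> x $ m" "x $ m \<le> 1" for m
      using x by (auto simp: Pkn_def unit_cube_def)
    with no_other have x01: "x $ m = (if x $ m = 1 then 1 else 0)" if "m \<noteq> l" for m
      using that by (auto simp: less_le)
    define N where "N = card {m \<in> UNIV - {l}. x $ m = 1}"
    have "real k = x $ l + (\<Sum>m\<in>UNIV - {l}. x $ m)"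
      using x sum.remove[of UNIV l "\<lambda>m. x $ m"] by (simp add: Pkn_def)
    also have "(\<Sum>m\<in>UNIV - {l}. x $ m) = (\<Sum>m\<in>UNIV - {l}. if x $ m = 1 then 1 else 0)"
      by (rule sum.cong) (use x01 in auto)
    also have "\<dots> = real N"
      by (simp add: N_def sum.If_cases Int_def)
    finally have "x $ l = real k - real N"
      by simp
    with l have "N < k" "real k < real N + 1"
      by simp_all
    then show False
      by linarith
  qed
  then show ?thesis
    using that by blast
qed

lemma vertices_Pkn_subset: "vertices (Pkn k) \<subseteq> Pkn k"
  by (auto simp: vertices_def extreme_point_of_def)

lemma vertex_Pkn_01:
  assumes v: "v \<in> vertices (Pkn k :: (real ^ 'n::finite) set)"
  shows "v $ l \<in> {0, 1}"
proof (rule ccontr)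
  assume "v $ l \<notin> {0, 1}"
  moreover have vP: "v \<in> Pkn k"
    using v vertices_Pkn_subset by blast
  ultimately have l: "0 < v $ l" "v $ l < 1"
    by (auto simp: Pkn_def unit_cube_def less_le)
  obtain m where m: "m \<noteq> l" "0 < v $ m" "v $ m < 1"
    using Pkn_other_fractional_coord[OF vP l] .
  define e where "e = min (min (v $ l) (1 - v $ l)) (min (v $ m) (1 - v $ m))"
  have e: "0 < e" "e \<le> v $ l" "e \<le> 1 - v $ l" "e \<le> v $ m" "e \<le> 1 - v $ m"
    using l m by (auto simp: e_def)
  define d where "d = axis l e - axis m e"
  have d_nth: "d $ i = (if i = l then e else 0) - (if i = m then e else 0)" for i
    by (simp add: d_def axis_def)
  have shifted: "v + c *\<^sub>R d \<in> Pkn k" if "\<bar>c\<bar> = 1" for c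
  proof -
    have "(\<Sum>i\<in>UNIV. (v + c *\<^sub>R d) $ i) = (\<Sum>i\<in>UNIV. v $ i)"
      by (simp add: d_nth sum.distrib sum_subtractf flip: sum_distrib_left)
    moreover have "0 \<le> (v + c *\<^sub>R d) $ i \<and> (v + c *\<^sub>R d) $ i \<le> 1" for i
      using vP that e m(1) unfolding Pkn_def unit_cube_def
      by (cases "i = l"; cases "i = m") (auto simp: d_nth abs_if split: if_splits)
    ultimately show ?thesis
      using vP by (simp add: Pkn_def unit_cube_def)
  qed
  have "(v + d) $ l \<noteq> (v - d) $ l"
    using e(1) m(1) by (simp add: d_nth)
  then have "v + d \<noteq> v - d"
    by metis
  then have "v \<in> open_segment (v + d) (v - d)"
    using midpoint_in_open_segment[of "v + d" "v - d"] by (simp add: midpoint_def)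
  then show False
    using v shifted[of 1] shifted[of "-1"] by (auto simp: vertices_def extreme_point_of_def)
qed

lemma vertices_Pkn: "vertices (Pkn k :: (real ^ 'n::finite) set) = ind_vec ` {W. card W = k}"
proof
  show "vertices (Pkn k) \<subseteq> ind_vec ` {W :: 'n set. card W = k}"
  proof
    fix v assume v: "v \<in> vertices (Pkn k :: (real ^ 'n) set)"
    then have v_eq: "v = ind_vec {l. v $ l = 1}"
      using vertex_Pkn_01[OF v] by (auto simp: vec_eq_iff)
    have "v \<in> Pkn k"
      using v vertices_Pkn_subset by blast
    then have "real (card {l. v $ l = 1}) = real k"
      using sum_ind_vec[of "{l. v $ l = 1}"] by (simp add: Pkn_def flip: v_eq)
    then show "v \<in> ind_vec ` {W. card W = k}"
      using v_eq by auto
  qed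
  show "ind_vec ` {W :: 'n set. card W = k} \<subseteq> vertices (Pkn k)"
    by (auto simp: vertices_def intro!: extreme_point_of_if_01 ind_vec_in_Pkn Pkn_subset_unit_cube
             split: if_splits)
qed

lemma finite_vertices_Pkn: "finite (vertices (Pkn k :: (real ^ 'n::finite) set))"
  by (simp add: vertices_Pkn)

lemma sum_weights_eq_1:
  fixes p :: "real ^ 'n::finite \<Rightarrow> real"
  assumes "finite V" and "V \<subseteq> Pkn k" and "0 < k" and "(\<Sum>v\<in>V. p v *\<^sub>R v) \<in> Pkn k"
  shows "sum p V = 1"
proof -
  have "real k = (\<Sum>l\<in>UNIV. \<Sum>v\<in>V. p v * v $ l)"
    using assms(4) by (simp add: Pkn_def sum_component)
  also have "\<dots> = (\<Sum>v\<in>V. p v * (\<Sum>l\<in>UNIV. v $ l))"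
    by (simp add: sum.swap[of _ UNIV] sum_distrib_left)
  also have "\<dots> = (\<Sum>v\<in>V. p v * real k)"
    using assms(2) by (intro sum.cong) (auto simp: Pkn_def)
  finally show ?thesis
    using assms(3) by (simp flip: sum_distrib_right)
qed

lemma weight_eq_0_if_coord_differs:
  fixes p :: "real ^ 'n \<Rightarrow> real"
  assumes fin: "finite V" and cube: "V \<subseteq> unit_cube" and nonneg: "\<And>w. w \<in> V \<Longrightarrow> 0 \<le> p w"
    and sum1: "sum p V = 1" and x: "(\<Sum>w\<in>V. p w *\<^sub>R w) = x" and xl: "x $ l \<in> {0, 1}"
    and v: "v \<in> V" "v $ l \<noteq> x $ l"
  shows "p v = 0"
proof -
  have "(\<Sum>w\<in>V. p w * w $ l) = x $ l"
    using x by (auto simp: sum_component)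
  then have deviation_sum: "(\<Sum>w\<in>V. p w * (w $ l - x $ l)) = 0"
    using sum1 by (simp add: right_diff_distrib sum_subtractf flip: sum_distrib_right)
  \<comment> \<open>As \<open>x $ l\<close> is 0 or 1 and every \<open>w $ l\<close> lies in [0,1],
    the deviations all have the same sign.\<close>
  have abs_deviation: "\<bar>w $ l - x $ l\<bar> = (w $ l - x $ l) * (1 - 2 * x $ l)" if "w \<in> V" for w
    using xl cube that by (auto simp: unit_cube_def)
  have "(\<Sum>w\<in>V. p w * \<bar>w $ l - x $ l\<bar>) = (\<Sum>w\<in>V. p w * (w $ l - x $ l)) * (1 - 2 * x $ l)"
    unfolding sum_distrib_right using abs_deviation by (intro sum.cong) simp_all
  also have "\<dots> = 0"
    using deviation_sum by simp
  finally have "(\<Sum>w\<in>V. p w * \<bar>w $ l - x $ l\<bar>) = 0" .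
  then have "p v * \<bar>v $ l - x $ l\<bar> = 0"
    using sum_nonneg_eq_0_iff[OF fin, of "\<lambda>w. p w * \<bar>w $ l - x $ l\<bar>"] nonneg v(1) by simp
  then show ?thesis
    using v(2) by simp
qed

locale Pkn_factory =
  fixes k :: nat and t :: "('n::finite, real ^ 'n) bf_tree"
  assumes strong: "strong_factory (Pkn k) t" and k_pos: "0 < k"
begin

lemma factory: "bernoulli_factory (vertices (Pkn k)) t"
  using strong by (simp add: strong_factory_def)

lemma term_prob_convergent: "x \<in> Pkn k \<Longrightarrow> convergent (term_prob t x)"
  using strong by (auto simp: strong_factory_def convergent_def)

lemma Pv_representation: "x \<in> Pkn k \<Longrightarrow> (\<Sum>v\<in>vertices (Pkn k). Pv t v x *\<^sub>R v) = x"
  using strong by (simp add: strong_factory_def)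

lemma PvT_le_Pv_Pkn: "x \<in> Pkn k \<Longrightarrow> PvT t v x T \<le> Pv t v x"
  using PvT_le_Pv[OF factory] Pkn_subset_unit_cube term_prob_convergent by blast

lemma Pv_nonneg: "x \<in> Pkn k \<Longrightarrow> 0 \<le> Pv t v x"
  using PvT_le_Pv_Pkn PvT_nonneg[OF factory] Pkn_subset_unit_cube by (meson order_trans subsetD)

lemma Pv_eq_0_if_coord_differs:
  assumes x: "x \<in> Pkn k" and "x $ l \<in> {0, 1}" and "v \<in> vertices (Pkn k)" and "v $ l \<noteq> x $ l"
  shows "Pv t v x = 0"
proof (rule weight_eq_0_if_coord_differs[OF finite_vertices_Pkn _ _ _ Pv_representation[OF x]])
  show "vertices (Pkn k) \<subseteq> unit_cube"
    using vertices_Pkn_subset Pkn_subset_unit_cube by blast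
  show "sum (\<lambda>v. Pv t v x) (vertices (Pkn k)) = 1"
    using x k_pos vertices_Pkn_subset
    by (intro sum_weights_eq_1) (simp_all add: Pv_representation finite_vertices_Pkn)
qed (use assms Pv_nonneg in auto)

lemma PvT_eq_0_at_other_vertex:
  assumes W: "card W = k" and v: "v \<in> vertices (Pkn k)" "v \<noteq> ind_vec W"
  shows "PvT t v (ind_vec W) T = 0"
proof -
  have W_in: "ind_vec W \<in> Pkn k"
    using W by (rule ind_vec_in_Pkn)
  obtain l where "v $ l \<noteq> ind_vec W $ l"
    using v(2) by (auto simp: vec_eq_iff)
  then have "Pv t v (ind_vec W) = 0"
    using v(1) by (intro Pv_eq_0_if_coord_differs[OF W_in]) auto
  then show ?thesis
    using PvT_le_Pv_Pkn[OF W_in] PvT_nonneg[OF factory] W_in Pkn_subset_unit_cube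
    by (metis order_antisym subsetD)
qed

lemma Pv_eq_0_off_exchange_edge:
  fixes W :: "'n set" and i j :: 'n
  defines "W' \<equiv> insert j (W - {i})"
  assumes W: "card W = k" and i: "i \<in> W" and j: "j \<notin> W" and s: "0 \<le> s" "s \<le> 1"
    and u: "u \<in> vertices (Pkn k)" "u \<noteq> ind_vec W" "u \<noteq> ind_vec W'"
  shows "Pv t u (ind_vec W + s *\<^sub>R (ind_vec W' - ind_vec W)) = 0"
proof (rule ccontr)
  let ?x = "ind_vec W + s *\<^sub>R (ind_vec W' - ind_vec W)"
  assume nonzero: "Pv t u ?x \<noteq> 0"
  obtain U where U: "u = ind_vec U" "card U = k"
    using u(1) by (auto simp: vertices_Pkn)
  have x_in: "?x \<in> Pkn k"
    unfolding W'_def using W i j s by (rule exchange_edge_in_Pkn)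
  have "l \<in> U \<longleftrightarrow> l \<in> W" if "l \<noteq> i" "l \<noteq> j" for l
  proof -
    have x_l: "?x $ l = ind_vec W $ l"
      using that by (simp add: W'_def)
    then have "u $ l = ?x $ l"
      using Pv_eq_0_if_coord_differs[OF x_in _ u(1)] nonzero by fastforce
    then show ?thesis
      using x_l by (simp add: U(1) split: if_splits)
  qed
  then have "U = W \<or> U = W'"
    unfolding W'_def using W U(2) i j by (intro eq_or_exchange_if_agree_off_pair) auto
  then show False
    using u U(1) by blast
qed

lemma Pv_on_exchange_edge:
  fixes W :: "'n set" and i j :: 'n
  defines "W' \<equiv> insert j (W - {i})"
  assumes W: "card W = k" and i: "i \<in> W" and j: "j \<notin> W" and s: "0 \<le> s" "s \<le> 1"
    and v: "v \<in> vertices (Pkn k)" "v \<noteq> ind_vec W"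
  shows "Pv t v (ind_vec W + s *\<^sub>R (ind_vec W' - ind_vec W)) = (if v = ind_vec W' then s else 0)"
proof (cases "v = ind_vec W'")
  case False
  then show ?thesis
    using Pv_eq_0_off_exchange_edge[OF W i j s v] by (simp add: W'_def)
next
  case True
  let ?x = "ind_vec W + s *\<^sub>R (ind_vec W' - ind_vec W)"
  have x_in: "?x \<in> Pkn k"
    unfolding W'_def using W i j s by (rule exchange_edge_in_Pkn)
  have "s = ?x $ j"
    using j by (simp add: W'_def)
  also have "\<dots> = (\<Sum>u\<in>vertices (Pkn k). Pv t u ?x *\<^sub>R u) $ j"
    unfolding Pv_representation[OF x_in] ..
  also have "\<dots> = (\<Sum>u\<in>vertices (Pkn k). Pv t u ?x * u $ j)"
    by (simp add: sum_component)
  also have "\<dots> = (\<Sum>u\<in>{ind_vec W'}. Pv t u ?x * u $ j)"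
  proof (rule sum.mono_neutral_right[OF finite_vertices_Pkn])
    show "{ind_vec W'} \<subseteq> vertices (Pkn k)"
      using v True by simp
    show "\<forall>u\<in>vertices (Pkn k) - {ind_vec W'}. Pv t u ?x * u $ j = 0"
    proof
      fix u assume "u \<in> vertices (Pkn k) - {ind_vec W'}"
      then show "Pv t u ?x * u $ j = 0"
        using Pv_eq_0_off_exchange_edge[OF W i j s] j
        by (cases "u = ind_vec W") (auto simp: W'_def)
    qed
  qed
  also have "\<dots> = Pv t v ?x"
    using True by (simp add: W'_def)
  finally show ?thesis
    using True by simp
qed

end

locale differentiable_Pkn_factory = Pkn_factory k t
  for k and t :: "('n::finite, real ^ 'n) bf_tree" +
  assumes differentiable: "differentiable_factory (Pkn k) t"
begin

definition dPvT :: "real ^ 'n \<Rightarrow> 'n set \<Rightarrow> nat \<Rightarrow> real ^ 'n \<Rightarrow> real" where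
  "dPvT v W T = frechet_derivative (\<lambda>x. PvT t v x T) (at (ind_vec W))"

lemma has_derivative_dPvT: "((\<lambda>x. PvT t v x T) has_derivative dPvT v W T) (at (ind_vec W))"
  unfolding dPvT_def by (rule PvT_differentiable[unfolded frechet_derivative_works])

lemma linear_dPvT: "linear (dPvT v W T)"
  using has_derivative_dPvT by (rule has_derivative_linear)

lemma dPvT_nonneg_if_feasible:
  assumes W: "card W = k" and v: "v \<in> vertices (Pkn k)" "v \<noteq> ind_vec W"
    and feasible: "\<And>s. 0 < s \<Longrightarrow> s < 1 \<Longrightarrow> ind_vec W + s *\<^sub>R u \<in> unit_cube"
  shows "0 \<le> dPvT v W T u"
proof (rule has_derivative_nonneg_at_one_sided_min[OF has_derivative_dPvT zero_less_one])
  fix s :: real assume "0 < s" "s < 1"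
  then show "PvT t v (ind_vec W) T \<le> PvT t v (ind_vec W + s *\<^sub>R u) T"
    using PvT_eq_0_at_other_vertex[OF W v] PvT_nonneg[OF factory feasible] by simp
qed

lemma dPvT_exchange_eq:
  assumes "i \<in> W" and "j \<notin> W"
  shows "dPvT v W T (ind_vec (insert j (W - {i})) - ind_vec W)
           = dPvT v W T (axis j 1) + dPvT v W T (- axis i 1)"
  using assms linear_add[OF linear_dPvT, of v W T "axis j 1" "- axis i 1"]
  by (simp add: ind_vec_exchange_diff)

lemma dPvT_exchange_tendsto:
  fixes W :: "'n set" and i j :: 'n
  defines "W' \<equiv> insert j (W - {i})"
  assumes W: "card W = k" and i: "i \<in> W" and j: "j \<notin> W"
    and v: "v \<in> vertices (Pkn k)" "v \<noteq> ind_vec W"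
  shows "(\<lambda>T. dPvT v W T (ind_vec W' - ind_vec W)) \<longlonglongrightarrow> (if v = ind_vec W' then 1 else 0)"
proof -
  define d where "d = ind_vec W' - ind_vec W"
  define a where "a = 1 / norm d"
  define c :: real where "c = (if v = ind_vec W' then 1 else 0)"
  have "d $ j = 1"
    using j by (simp add: d_def W'_def)
  then have "d \<noteq> 0"
    by auto
  then have a: "0 < a" "norm (a *\<^sub>R d) = 1"
    by (simp_all add: a_def)
  have W'_card: "card W' = k"
    using card_exchange[of W i j] W i j by (simp add: W'_def)
  have W_in: "ind_vec W \<in> Pkn k" and W'_in: "ind_vec W' \<in> Pkn k"
    using W W'_card by (simp_all add: ind_vec_in_Pkn)
  have "a *\<^sub>R d \<in> H0 (Pkn k)"
    unfolding d_def using W_in W'_in by (rule scaleR_diff_in_H0)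
  then obtain D
    where D: "((\<lambda>s. Pv t v (ind_vec W + s *\<^sub>R (a *\<^sub>R d))) has_real_derivative D)
                (at 0 within {s. ind_vec W + s *\<^sub>R (a *\<^sub>R d) \<in> unit_cube})"
      and lim: "(\<lambda>T. deriv (\<lambda>s. PvT t v (ind_vec W + s *\<^sub>R (a *\<^sub>R d)) T) 0) \<longlonglongrightarrow> D"
    using differentiable v(1) a(2) W_in unfolding differentiable_factory_def by blast
  have on_edge: "ind_vec W + s *\<^sub>R (a *\<^sub>R d) \<in> Pkn k \<and>
                   Pv t v (ind_vec W + s *\<^sub>R (a *\<^sub>R d)) = c * a * s"
    if "0 \<le> s" "s \<le> 1 / a" for s
  proof -
    have as: "0 \<le> a * s" "a * s \<le> 1"
      using that a(1) by (simp_all add: field_simps)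
    have "ind_vec W + s *\<^sub>R (a *\<^sub>R d) = ind_vec W + (a * s) *\<^sub>R (ind_vec W' - ind_vec W)"
      by (simp add: d_def)
    then show ?thesis
      using exchange_edge_in_Pkn[OF W i j as] Pv_on_exchange_edge[OF W i j as v]
      by (simp add: c_def W'_def)
  qed
  have "D = c * a"
  proof (rule has_real_derivative_within_eq_slope[OF D])
    show "{0..1 / a} \<subseteq> {s. ind_vec W + s *\<^sub>R (a *\<^sub>R d) \<in> unit_cube}"
    proof
      fix s assume "s \<in> {0..1 / a}"
      then have "ind_vec W + s *\<^sub>R (a *\<^sub>R d) \<in> Pkn k"
        using on_edge[of s] by auto
      then show "s \<in> {s. ind_vec W + s *\<^sub>R (a *\<^sub>R d) \<in> unit_cube}"
        using Pkn_subset_unit_cube by blast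
    qed
  qed (use a(1) on_edge in simp_all)
  moreover have "deriv (\<lambda>s. PvT t v (ind_vec W + s *\<^sub>R (a *\<^sub>R d)) T) 0 = a * dPvT v W T d" for T
  proof -
    have "deriv (\<lambda>s. PvT t v (ind_vec W + s *\<^sub>R (a *\<^sub>R d)) T) 0 = dPvT v W T (a *\<^sub>R d)"
      by (rule DERIV_imp_deriv[OF has_real_derivative_along_line[OF has_derivative_dPvT]])
    then show ?thesis
      by (simp add: linear_cmul[OF linear_dPvT])
  qed
  ultimately have "(\<lambda>T. a * dPvT v W T d) \<longlonglongrightarrow> a * c"
    using lim by (simp add: mult.commute)
  then show ?thesis
    using a(1) by (simp add: c_def d_def)
qed

lemma no_two_in_two_out:
  fixes W :: "'n set"
  assumes W: "card W = k" and i: "i \<in> W" "i' \<in> W" "i \<noteq> i'"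
    and j: "j \<notin> W" "j' \<notin> W" "j \<noteq> j'"
  shows False
proof -
  define v where "v = ind_vec (insert j (W - {i}))"
  have v_vertex: "v \<in> vertices (Pkn k)"
    using card_exchange[of W i j] W i j by (auto simp: v_def vertices_Pkn)
  have v_ne: "v \<noteq> ind_vec W" "v \<noteq> ind_vec (insert j (W - {i'}))" "v \<noteq> ind_vec (insert j' (W - {i}))"
    using i j by (auto simp: v_def)
  define A where "A T = dPvT v W T (axis j 1)" for T
  define A' where "A' T = dPvT v W T (axis j' 1)" for T
  define B where "B T = dPvT v W T (- axis i 1)" for T
  define B' where "B' T = dPvT v W T (- axis i' 1)" for T
  have in_dir: "ind_vec W + s *\<^sub>R axis l 1 \<in> unit_cube" if "l \<notin> W" "0 < s" "s < 1" for l s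
    using that by (auto simp: unit_cube_def axis_def)
  have out_dir: "ind_vec W + s *\<^sub>R - axis l 1 \<in> unit_cube" if "l \<in> W" "0 < s" "s < 1" for l s
    using that by (auto simp: unit_cube_def axis_def)
  have nonneg: "0 \<le> A T" "0 \<le> A' T" "0 \<le> B T" "0 \<le> B' T" for T
    unfolding A_def A'_def B_def B'_def using W v_vertex v_ne(1) i j
    by (auto intro!: dPvT_nonneg_if_feasible in_dir out_dir)
  have lim: "(\<lambda>T. A T + B T) \<longlonglongrightarrow> 1" "(\<lambda>T. A T + B' T) \<longlonglongrightarrow> 0"
    "(\<lambda>T. A' T + B T) \<longlonglongrightarrow> 0"
    using dPvT_exchange_tendsto[OF W i(1) j(1) v_vertex v_ne(1)]
      dPvT_exchange_tendsto[OF W i(2) j(1) v_vertex v_ne(1)]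
      dPvT_exchange_tendsto[OF W i(1) j(2) v_vertex v_ne(1)] v_ne i j
    by (simp_all add: A_def A'_def B_def B'_def dPvT_exchange_eq v_def)
  have "A \<longlonglongrightarrow> 0"
    by (rule tendsto_sandwich[OF _ _ tendsto_const lim(2)]) (use nonneg in auto)
  moreover have "B \<longlonglongrightarrow> 0"
    by (rule tendsto_sandwich[OF _ _ tendsto_const lim(3)]) (use nonneg in auto)
  ultimately have "(\<lambda>T. A T + B T) \<longlonglongrightarrow> 0"
    using tendsto_add by fastforce
  then show False
    using lim(1) LIMSEQ_unique by fastforce
qed

end

theorem lemma7p7:
  fixes k :: nat
  assumes "1 < k" and "k + 1 < CARD('n::finite)"
  shows "\<not> (\<exists>t :: ('n, real ^ 'n) bf_tree.
            strong_factory (Pkn k :: (real ^ 'n) set) t \<and> differentiable_factory (Pkn k) t)"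
proof
  assume "\<exists>t :: ('n, real ^ 'n) bf_tree.
            strong_factory (Pkn k :: (real ^ 'n) set) t \<and> differentiable_factory (Pkn k) t"
  then obtain t :: "('n, real ^ 'n) bf_tree"
    where "strong_factory (Pkn k) t" and "differentiable_factory (Pkn k) t"
    by blast
  then interpret differentiable_Pkn_factory k t
    using assms(1) by unfold_locales simp_all
  obtain W :: "'n set" where W: "card W = k"
    using obtain_subset_with_card_n[of k "UNIV :: 'n set"] assms(2) by auto
  obtain i i' where i: "i \<in> W" "i' \<in> W" "i \<noteq> i'"
    using W assms(1) card_le_Suc0_iff_eq[of W] by auto
  have "card (UNIV - W) = CARD('n) - k"
    using W by (simp add: card_Diff_subset)
  then obtain j j' where j: "j \<notin> W" "j' \<notin> W" "j \<noteq> j'"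
    using assms(2) card_le_Suc0_iff_eq[of "UNIV - W"] by auto
  show False
    using no_two_in_two_out[OF W i j] .
qed

end
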